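(* The functor $\mathrm{Max}$ from the category of unital C*-algebras (with unital *-homomorphisms) to the category of unital involutive quantales (with unital involutive homomorphisms) does not preserve products.
   Context: A quantale is a complete lattice with an associative multiplication distributing over arbitrary joins in both variables; it is unital if it has a multiplicative unit; an involutive quantale has an involution $^*$ with $a^{**}=a$, $(a\cdot b)^*=b^*\cdot a^*$, $(\bigvee a_i)^*=\bigvee a_i^*$; morphisms preserve joins, multiplication, unit and involution. For a unital C*-algebra $A$, $\mathrm{Max}\,A$ is the quantale of all closed linear subspaces of $A$ with join $\bigvee_i M_i=\overline{\sum_i M_i}$, product $M\cdot N=$ closure of the linear span of $\{ab:a\in M,b\in N\}$, involution $M^*=\{a^*:a\in M\}$, and unit the subspace spanned by the identity. For a unital *-homomorphism $f:A\to B$, $\mathrm{Max}\,f(M)=\overline{f[M]}$. *)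

theory Defs
  imports "HOL-Analysis.Analysis"
begin

class unital_cstar_algebra = banach + real_normed_algebra_1 +
  fixes scaleC :: "complex \<Rightarrow> 'a \<Rightarrow> 'a"
    and cstar :: "'a \<Rightarrow> 'a"
  assumes scaleC_add_right: "scaleC c (x + y) = scaleC c x + scaleC c y"
    and scaleC_add_left: "scaleC (c + d) x = scaleC c x + scaleC d x"
    and scaleC_scaleC: "scaleC c (scaleC d x) = scaleC (c * d) x"
    and scaleC_one: "scaleC 1 x = x"
    and scaleR_scaleC: "scaleR r x = scaleC (complex_of_real r) x"
    and norm_scaleC: "norm (scaleC c x) = cmod c * norm x"
    and scaleC_mult_left: "scaleC c x * y = scaleC c (x * y)"
    and scaleC_mult_right: "x * scaleC c y = scaleC c (x * y)"
    and cstar_cstar: "cstar (cstar x) = x"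
    and cstar_add: "cstar (x + y) = cstar x + cstar y"
    and cstar_scaleC: "cstar (scaleC c x) = scaleC (cnj c) (cstar x)"
    and cstar_mult: "cstar (x * y) = cstar y * cstar x"
    and cstar_identity: "norm (cstar x * x) = (norm x)\<^sup>2"

instantiation complex :: unital_cstar_algebra
begin
definition scaleC_complex :: "complex \<Rightarrow> complex \<Rightarrow> complex" where
  "scaleC_complex c x = c * x"
definition cstar_complex :: "complex \<Rightarrow> complex" where
  "cstar_complex x = cnj x"
instance
  by standard (auto simp: scaleC_complex_def cstar_complex_def algebra_simps
      scaleR_conv_of_real norm_mult complex_norm_square[symmetric] power2_eq_square)
end

record 'q iquantale =
  qcar :: "'q set"
  qsup :: "'q set \<Rightarrow> 'q"
  qmul :: "'q \<Rightarrow> 'q \<Rightarrow> 'q"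
  qone :: "'q"
  qinv :: "'q \<Rightarrow> 'q"

definition iq_hom :: "('q, 'm) iquantale_scheme \<Rightarrow> ('r, 'n) iquantale_scheme \<Rightarrow> ('q \<Rightarrow> 'r) \<Rightarrow> bool" where
  "iq_hom Q R h \<longleftrightarrow>
     (\<forall>x\<in>qcar Q. h x \<in> qcar R) \<and>
     (\<forall>S. S \<subseteq> qcar Q \<longrightarrow> h (qsup Q S) = qsup R (h ` S)) \<and>
     (\<forall>x\<in>qcar Q. \<forall>y\<in>qcar Q. h (qmul Q x y) = qmul R (h x) (h y)) \<and>
     h (qone Q) = qone R \<and>
     (\<forall>x\<in>qcar Q. h (qinv Q x) = qinv R (h x))"

text \<open>Isomorphism: a bijective homomorphism (its inverse is then automatically
  a homomorphism).\<close>
definition iq_iso :: "('q, 'm) iquantale_scheme \<Rightarrow> ('r, 'n) iquantale_scheme \<Rightarrow> ('q \<Rightarrow> 'r) \<Rightarrow> bool" where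
  "iq_iso Q R h \<longleftrightarrow> iq_hom Q R h \<and> bij_betw h (qcar Q) (qcar R)"

definition prod_q :: "'q iquantale \<Rightarrow> 'r iquantale \<Rightarrow> ('q \<times> 'r) iquantale" where
  "prod_q Q R = \<lparr> qcar = qcar Q \<times> qcar R,
     qsup = (\<lambda>S. (qsup Q (fst ` S), qsup R (snd ` S))),
     qmul = (\<lambda>x y. (qmul Q (fst x) (fst y), qmul R (snd x) (snd y))),
     qone = (qone Q, qone R),
     qinv = (\<lambda>x. (qinv Q (fst x), qinv R (snd x))) \<rparr>"

definition csubspace :: "(complex \<Rightarrow> 'a::ab_group_add \<Rightarrow> 'a) \<Rightarrow> 'a set \<Rightarrow> bool" where
  "csubspace sc M \<longleftrightarrow> 0 \<in> M \<and> (\<forall>x\<in>M. \<forall>y\<in>M. x + y \<in> M) \<and> (\<forall>c. \<forall>x\<in>M. sc c x \<in> M)"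

definition cspan :: "(complex \<Rightarrow> 'a::ab_group_add \<Rightarrow> 'a) \<Rightarrow> 'a set \<Rightarrow> 'a set" where
  "cspan sc X = \<Inter>{M. csubspace sc M \<and> X \<subseteq> M}"

definition Max_gen :: "(complex \<Rightarrow> 'a::{ab_group_add,topological_space} \<Rightarrow> 'a) \<Rightarrow>
    ('a \<Rightarrow> 'a \<Rightarrow> 'a) \<Rightarrow> 'a \<Rightarrow> ('a \<Rightarrow> 'a) \<Rightarrow> 'a set iquantale" where
  "Max_gen sc mul one st = \<lparr>
     qcar = {M. csubspace sc M \<and> closed M},
     qsup = (\<lambda>Ms. closure (cspan sc (\<Union>Ms))),
     qmul = (\<lambda>M N. closure (cspan sc {mul a b | a b. a \<in> M \<and> b \<in> N})),
     qone = cspan sc {one},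
     qinv = (\<lambda>M. st ` M) \<rparr>"

definition MaxQ :: "'a::unital_cstar_algebra itself \<Rightarrow> 'a set iquantale" where
  "MaxQ _ = Max_gen scaleC (*) 1 cstar"

text \<open>The product C*-algebra A \<times> B: componentwise operations, max norm;
  the max norm induces the product topology, which is the topology of the
  product type used here.\<close>
definition MaxQ_prod :: "'a::unital_cstar_algebra itself \<Rightarrow> 'b::unital_cstar_algebra itself
    \<Rightarrow> ('a \<times> 'b) set iquantale" where
  "MaxQ_prod _ _ = Max_gen (\<lambda>c x. (scaleC c (fst x), scaleC c (snd x)))
      (\<lambda>x y. (fst x * fst y, snd x * snd y)) (1, 1)
      (\<lambda>x. (cstar (fst x), cstar (snd x)))"

definition Max_map :: "('a::topological_space \<Rightarrow> 'b::topological_space) \<Rightarrow> 'a set \<Rightarrow> 'b set" where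
  "Max_map f M = closure (f ` M)"

end

theory Submission
  imports Defs
begin

text \<open>A closed subspace of \<open>A \<times> B\<close> is not determined by its two projections:
  the diagonal line \<open>\<complex>(1, 1)\<close> and the plane \<open>\<complex>1 \<times> \<complex>1\<close> are distinct closed subspaces,
  both projecting onto \<open>\<complex>1\<close> in each factor. Hence the comparison map
  \<open>Max (A \<times> B) \<rightarrow> Max A \<times> Max B\<close> is not injective.\<close>

lemma scaleC_zero_left [simp]: "scaleC 0 (x :: 'a::unital_cstar_algebra) = 0"
  using scaleC_add_left [of 0 0 x] by simp

lemma norm_scaleC_one [simp]: "norm (scaleC c (1 :: 'a::unital_cstar_algebra)) = cmod c"
  by (simp add: norm_scaleC)

lemma bounded_linear_scaleC_left: "bounded_linear (\<lambda>c. scaleC c (x :: 'a::unital_cstar_algebra))"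
proof (rule bounded_linear_intro [where K = "norm x"])
  show "scaleC (c + d) x = scaleC c x + scaleC d x" for c d
    by (rule scaleC_add_left)
  show "scaleC (r *\<^sub>R c) x = r *\<^sub>R scaleC c x" for r c
    unfolding scaleR_conv_of_real [of r c] by (simp add: scaleR_scaleC scaleC_scaleC)
  show "norm (scaleC c x) \<le> norm c * norm x" for c
    by (simp add: norm_scaleC)
qed

lemma closed_range_bounded_below:
  fixes g :: "'a::banach \<Rightarrow> 'b::real_normed_vector"
  assumes "bounded_linear g" and "\<And>x. norm x \<le> norm (g x)"
  shows "closed (range g)"
proof -
  have "complete (range g)"
    by (rule complete_isometric_image [where e = 1]) (use assms in auto)
  then show ?thesis
    by (rule complete_imp_closed)
qed

lemma csubspace_scalar_line:
  fixes sc :: "complex \<Rightarrow> 'a::ab_group_add \<Rightarrow> 'a"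
  assumes "sc 0 x = 0"
    and "\<And>c d. sc c x + sc d x = sc (c + d) x"
    and "\<And>c d. sc c (sc d x) = sc (c * d) x"
  shows "csubspace sc (range (\<lambda>c. sc c x))"
  unfolding csubspace_def
proof (intro conjI ballI allI)
  show "0 \<in> range (\<lambda>c. sc c x)"
    using assms(1) by (metis rangeI)
  show "y + z \<in> range (\<lambda>c. sc c x)" if "y \<in> range (\<lambda>c. sc c x)" "z \<in> range (\<lambda>c. sc c x)" for y z
    using that assms(2) by auto
  show "sc c y \<in> range (\<lambda>c. sc c x)" if "y \<in> range (\<lambda>c. sc c x)" for c y
    using that assms(3) by auto
qed

lemma csubspace_Times:
  assumes "csubspace scA X" and "csubspace scB Y"
  shows "csubspace (\<lambda>c z. (scA c (fst z), scB c (snd z))) (X \<times> Y)"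
  using assms by (auto simp: csubspace_def zero_prod_def)

lemma MaxQ_prod_carrier:
  "qcar (MaxQ_prod A B) =
     {M. csubspace (\<lambda>c z. (scaleC c (fst z), scaleC c (snd z))) M \<and> closed M}"
  by (simp add: MaxQ_prod_def Max_gen_def)

definition unit_line :: "'a::unital_cstar_algebra set" where
  "unit_line = range (\<lambda>c. scaleC c 1)"

definition diagonal_line :: "('a::unital_cstar_algebra \<times> 'b::unital_cstar_algebra) set" where
  "diagonal_line = range (\<lambda>c. (scaleC c 1, scaleC c 1))"

lemma csubspace_unit_line: "csubspace scaleC unit_line"
  unfolding unit_line_def
  by (rule csubspace_scalar_line) (simp_all add: scaleC_add_left scaleC_scaleC)

lemma closed_unit_line: "closed unit_line"
  unfolding unit_line_def
  by (rule closed_range_bounded_below [OF bounded_linear_scaleC_left]) simp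

lemma unit_line_times_in_MaxQ_prod:
  "unit_line \<times> unit_line \<in> qcar (MaxQ_prod A B)"
  by (simp add: MaxQ_prod_carrier csubspace_Times csubspace_unit_line closed_Times closed_unit_line)

lemma diagonal_line_in_MaxQ_prod:
  "diagonal_line \<in> qcar (MaxQ_prod A B)"
proof -
  let ?sc = "\<lambda>c (z :: 'a \<times> 'b). (scaleC c (fst z), scaleC c (snd z))"
  have "csubspace ?sc (range (\<lambda>c. ?sc c (1, 1)))"
    by (rule csubspace_scalar_line)
      (simp_all add: zero_prod_def scaleC_add_left scaleC_scaleC)
  moreover have "closed (range (\<lambda>c. (scaleC c 1 :: 'a, scaleC c 1 :: 'b)))"
  proof (rule closed_range_bounded_below)
    show "bounded_linear (\<lambda>c. (scaleC c 1 :: 'a, scaleC c 1 :: 'b))"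
      by (intro bounded_linear_Pair bounded_linear_scaleC_left)
    show "norm c \<le> norm (scaleC c 1 :: 'a, scaleC c 1 :: 'b)" for c
      using norm_fst_le [of "scaleC c 1 :: 'a" "scaleC c 1 :: 'b"] by simp
  qed
  ultimately show ?thesis
    by (simp add: MaxQ_prod_carrier diagonal_line_def)
qed

lemma fst_diagonal_line: "fst ` diagonal_line = unit_line"
  by (simp add: diagonal_line_def unit_line_def image_image)

lemma snd_diagonal_line: "snd ` diagonal_line = unit_line"
  by (simp add: diagonal_line_def unit_line_def image_image)

lemma diagonal_line_neq_unit_line_times:
  "(diagonal_line :: ('a::unital_cstar_algebra \<times> 'b::unital_cstar_algebra) set) \<noteq> unit_line \<times> unit_line"
proof
  assume diagonal: "diagonal_line = (unit_line \<times> unit_line :: ('a \<times> 'b) set)"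
  have "(1 :: 'a, 0 :: 'b) \<in> unit_line \<times> unit_line"
    unfolding unit_line_def by (metis SigmaI rangeI scaleC_one scaleC_zero_left)
  then have "(1 :: 'a, 0 :: 'b) \<in> diagonal_line"
    using diagonal by simp
  then obtain c where "(1 :: 'a, 0 :: 'b) = (scaleC c 1, scaleC c 1)"
    unfolding diagonal_line_def by blast
  then have "scaleC c (1 :: 'a) = 1" and "scaleC c (1 :: 'b) = 0"
    by simp_all
  then have "cmod c = 1" and "cmod c = 0"
    by (metis norm_scaleC_one norm_one, metis norm_scaleC_one norm_zero)
  then show False
    by simp
qed

theorem theorem5p2:
  fixes A :: "'a::unital_cstar_algebra itself" and B :: "'b::unital_cstar_algebra itself"
  shows "\<not> iq_iso (MaxQ_prod A B) (prod_q (MaxQ A) (MaxQ B))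
            (\<lambda>M. (Max_map fst M, Max_map snd M))"
proof
  assume "iq_iso (MaxQ_prod A B) (prod_q (MaxQ A) (MaxQ B))
            (\<lambda>M. (Max_map fst M, Max_map snd M))"
  then have inj: "inj_on (\<lambda>M. (Max_map fst M, Max_map snd M)) (qcar (MaxQ_prod A B))"
    by (simp add: iq_iso_def bij_betw_def)
  have "Max_map fst diagonal_line = Max_map fst (unit_line \<times> unit_line :: ('a \<times> 'b) set)"
    and "Max_map snd diagonal_line = Max_map snd (unit_line \<times> unit_line :: ('a \<times> 'b) set)"
    by (simp_all add: Max_map_def fst_diagonal_line snd_diagonal_line unit_line_def)
  then have "(diagonal_line :: ('a \<times> 'b) set) = unit_line \<times> unit_line"
    using inj_onD [OF inj] diagonal_line_in_MaxQ_prod unit_line_times_in_MaxQ_prod by blast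
  then show False
    using diagonal_line_neq_unit_line_times by blast
qed

end
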